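(* Let $\mathcal{T}=\mathcal{T}_1\cup\dots\cup\mathcal{T}_d$ be a compact interval partitioned into pairwise disjoint subintervals, $\boldsymbol{\phi}=(\phi_1,\dots,\phi_m)'$ linearly independent functions in $L^2(\mathcal{T})$, $\mathbf{W}=\int_{\mathcal{T}}\boldsymbol{\phi}\boldsymbol{\phi}'$, $\mathbf{W}_{\mathcal{T}_a}=\int_{\mathcal{T}_a}\boldsymbol{\phi}\boldsymbol{\phi}'$. Let $\mathbf{X}(t)=\mathbf{A}'\boldsymbol{\phi}(t)$ be a rank-$M$ ($M=mp$) $p$-variate process with separable covariance $\mathbf{K}(s,t)=\boldsymbol{\Sigma}^{\mathrm{row}}\kappa(s,t)$, random coefficient matrix $\mathbf{A}=(\mathbf{a}_1,\dots,\mathbf{a}_p)\in\mathbb{R}^{m\times p}$, mean $\boldsymbol{\mu}(t)=\mathbf{M}_{\mathbf{A}}'\boldsymbol{\phi}(t)$ with $\mathbf{M}_{\mathbf{A}}=(\mathbf{m}_{\mathbf{A},1},\dots,\mathbf{m}_{\mathbf{A},p})=E\mathbf{A}$, and $\kappa(s,t)=\boldsymbol{\phi}'(s)\boldsymbol{\Sigma}^{\mathrm{col}}\boldsymbol{\phi}(t)$ with $\boldsymbol{\Sigma}^{\mathrm{col}}$ positive definite. Let $(\lambda_j^{\mathrm{row}},\mathbf{v}_j^{\mathrm{row}})$, $j=1,\dots,p$, be the eigenpairs of $\boldsymbol{\Sigma}^{\mathrm{row}}$ and $v^{\mathrm{row}}_{j,k}=\mathbf{e}_k'\mathbf{v}^{\mathrm{row}}_j$.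 Then $$\Theta_{k,\mathcal{T}_a}(\mathbf{X},\boldsymbol{\mu};\mathbf{K},M)=\sum_{j=1}^p\frac{1}{\lambda_j^{\mathrm{row}}}v^{\mathrm{row}}_{j,k}(\mathbf{a}_k-\mathbf{m}_{\mathbf{A},k})'\mathbf{W}_{\mathcal{T}_a}\mathbf{W}^{-1}(\boldsymbol{\Sigma}^{\mathrm{col}})^{-1}(\mathbf{A}-\mathbf{M}_{\mathbf{A}})'\mathbf{v}^{\mathrm{row}}_j.$$
   Context: $\boldsymbol{\Sigma}^{\mathrm{row}}$ is $p\times p$ symmetric positive definite. The covariance operator $\mathcal{C}\mathbf{x}(s)=\int\mathbf{K}(s,t)\mathbf{x}(t)dt$ on $L^2(\mathcal{T})^p$ (inner product $\langle\mathbf{x},\mathbf{y}\rangle=\sum_j\int_{\mathcal{T}}x_jy_j$) has orthonormal eigenfunctions $\boldsymbol{\psi}_i$ and nonincreasing eigenvalues $\pi_i$; $\mathrm{fMMD}^2(\mathbf{Y},\boldsymbol{\mu};\mathbf{K},M)=\sum_{i=1}^M\pi_i^{-1}\langle\mathbf{Y}-\boldsymbol{\mu},\boldsymbol{\psi}_i\rangle^2$. For $Q\subseteq\{1,\dots,p\}\times\{1,\dots,d\}$, $\hat X^Q_j(t)=X_j(t)$ if $t\in\mathcal{T}_b$ with $(j,b)\in Q$ and $\hat X^Q_j(t)=\mu_j(t)$ otherwise; $\Theta_{k,\mathcal{T}_a}(\mathbf{X},\boldsymbol{\mu};\mathbf{K},M)=\sum_{Q\not\ni(k,a)}\frac{|Q|!(pd-|Q|-1)!}{(pd)!}[v(Q\cup\{(k,a)\})-v(Q)]$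 with $v(Q)=\mathrm{fMMD}^2(\hat{\mathbf{X}}^Q,\boldsymbol{\mu};\mathbf{K},M)$, the Shapley value of cell $(k,a)$. *)

theory Defs
  imports "HOL-Analysis.Analysis"
begin

definition L2_on :: "real set \<Rightarrow> (real \<Rightarrow> real) \<Rightarrow> bool" where
  "L2_on S f \<longleftrightarrow> set_borel_measurable lborel S f \<and> set_integrable lborel S (\<lambda>t. (f t)\<^sup>2)"

definition L2p_on :: "real set \<Rightarrow> (real \<Rightarrow> real ^ 'p) \<Rightarrow> bool" where
  "L2p_on S x \<longleftrightarrow> (\<forall>j. L2_on S (\<lambda>t. x t $ j))"

definition ip :: "real set \<Rightarrow> (real \<Rightarrow> real ^ 'p) \<Rightarrow> (real \<Rightarrow> real ^ 'p) \<Rightarrow> real" where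
  "ip S x y = (\<Sum>j\<in>UNIV. LINT t:S|lborel. x t $ j * y t $ j)"

definition gram :: "real set \<Rightarrow> (real \<Rightarrow> real ^ 'm) \<Rightarrow> real ^ 'm ^ 'm" where
  "gram S \<phi> = (\<chi> i j. LINT t:S|lborel. \<phi> t $ i * \<phi> t $ j)"

definition pos_def :: "real ^ 'n ^ 'n \<Rightarrow> bool" where
  "pos_def S \<longleftrightarrow> transpose S = S \<and> (\<forall>x. x \<noteq> 0 \<longrightarrow> x \<bullet> (S *v x) > 0)"

definition cov_op :: "real set \<Rightarrow> (real \<Rightarrow> real \<Rightarrow> real ^ 'p ^ 'p) \<Rightarrow> (real \<Rightarrow> real ^ 'p) \<Rightarrow> real \<Rightarrow> real ^ 'p" where
  "cov_op S K x = (\<lambda>s. \<chi> i. \<Sum>j\<in>UNIV. LINT t:S|lborel. K s t $ i $ j * x t $ j)"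

text \<open>fMMD^2(Y, mu; K, M) = sum_{i<M} pi_i^{-1} <Y - mu, psi_i>^2, where (psi_i, pi_i)
  (0-based index) is the orthonormal eigensystem of the covariance operator of K
  (hypotheses on psi, pi are stated in the theorem).\<close>
definition fMMD2 :: "real set \<Rightarrow> (nat \<Rightarrow> real \<Rightarrow> real ^ 'p) \<Rightarrow> (nat \<Rightarrow> real) \<Rightarrow> nat
    \<Rightarrow> (real \<Rightarrow> real ^ 'p) \<Rightarrow> (real \<Rightarrow> real ^ 'p) \<Rightarrow> real" where
  "fMMD2 S \<psi> \<pi> M Y \<mu> = (\<Sum>i<M. (ip S (\<lambda>t. Y t - \<mu> t) (\<psi> i))\<^sup>2 / \<pi> i)"

definition masked :: "('d \<Rightarrow> real set) \<Rightarrow> (real \<Rightarrow> real ^ 'p) \<Rightarrow> (real \<Rightarrow> real ^ 'p)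
    \<Rightarrow> ('p \<times> 'd) set \<Rightarrow> real \<Rightarrow> real ^ 'p" where
  "masked Tp X \<mu> Q = (\<lambda>t. \<chi> j. if \<exists>b. (j, b) \<in> Q \<and> t \<in> Tp b then X t $ j else \<mu> t $ j)"

definition shapley :: "('c::finite set \<Rightarrow> real) \<Rightarrow> 'c \<Rightarrow> real" where
  "shapley v c = (\<Sum>Q\<in>Pow (UNIV - {c}).
      (fact (card Q) * fact (CARD('c) - card Q - 1) / fact (CARD('c))) * (v (insert c Q) - v Q))"

end

theory Submission
  imports Defs
begin

(* The coefficient <X^Q - mu, psi_i> of a masked process is the sum, over the
   cells (j, b) in Q, of the contributions cell_ip of component j on T_b. Hence every term of
   fMMD^2 is the square of an additive game, whose Shapley value at a cell is its contribution
   times the total. Writing X - mu = D' phi with D = A - M_A and U_i = int phi psi_i', the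
   eigen-equation of the separable covariance operator becomes pi_i U_i = W Scol U_i Srow.
   So U_i = 0 when pi_i = 0, and <X - mu, psi_i> / pi_i = <E' phi, psi_i> with
   E = W^-1 Scol^-1 D Srow^-1. The matrices Scol U_i Srow / pi_i are biorthogonal to the U_j,
   so at most M = mp eigenvalues are nonzero, and Parseval's identity collapses the sum over
   i < M to the inner product of E' phi with the (k, a)-cell of X - mu, namely
   D_k' W_{T_a} E_k. Expanding Srow^-1 in its eigenbasis gives the formula. *)

section \<open>Square-integrable functions\<close>

lemma L2_on_measurable: "L2_on S f \<Longrightarrow> (\<lambda>t. indicator S t * f t) \<in> borel_measurable lborel"
  unfolding L2_on_def set_borel_measurable_def by simp

lemma L2_on_mult_integrable:
  assumes f: "L2_on S f" and g: "L2_on S g"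
  shows "set_integrable lborel S (\<lambda>t. f t * g t)"
proof (rule set_integrable_bound)
  show "set_integrable lborel S (\<lambda>t. (f t)\<^sup>2 + (g t)\<^sup>2)"
    using f g unfolding L2_on_def by (intro set_integral_add) auto
  have "(\<lambda>t. (indicator S t * f t) * (indicator S t * g t)) \<in> borel_measurable lborel"
    using L2_on_measurable[OF f] L2_on_measurable[OF g] by measurable
  moreover have "(\<lambda>t. (indicator S t * f t) * (indicator S t * g t)) = (\<lambda>t. indicator S t * (f t * g t))"
    by (auto simp: indicator_def)
  ultimately show "set_borel_measurable lborel S (\<lambda>t. f t * g t)"
    unfolding set_borel_measurable_def by simp
  have "\<bar>f t * g t\<bar> \<le> (f t)\<^sup>2 + (g t)\<^sup>2" for t
  proof -
    have "\<bar>f t * g t\<bar> \<le> 2 * \<bar>f t\<bar> * \<bar>g t\<bar>" by (simp add: abs_mult)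
    also have "\<dots> \<le> (f t)\<^sup>2 + (g t)\<^sup>2" using sum_squares_bound[of "\<bar>f t\<bar>" "\<bar>g t\<bar>"] by simp
    finally show ?thesis .
  qed
  then show "AE t in lborel. t \<in> S \<longrightarrow> norm (f t * g t) \<le> norm ((f t)\<^sup>2 + (g t)\<^sup>2)"
    by (intro AE_I2) simp
qed

lemma L2_on_add:
  assumes f: "L2_on S f" and g: "L2_on S g"
  shows "L2_on S (\<lambda>t. f t + g t)"
proof -
  have "(\<lambda>t. indicator S t * f t + indicator S t * g t) \<in> borel_measurable lborel"
    using L2_on_measurable[OF f] L2_on_measurable[OF g] by measurable
  moreover have "set_integrable lborel S (\<lambda>t. (f t)\<^sup>2 + (g t)\<^sup>2 + 2 * (f t * g t))"
    using f g L2_on_mult_integrable[OF f g] unfolding L2_on_def by (intro set_integral_add) auto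
  ultimately show ?thesis
    unfolding L2_on_def set_borel_measurable_def by (simp add: power2_sum distrib_left mult.assoc)
qed

lemma L2_on_cmult:
  assumes f: "L2_on S f"
  shows "L2_on S (\<lambda>t. c * f t)"
proof -
  have "(\<lambda>t. c * (indicator S t * f t)) \<in> borel_measurable lborel"
    using L2_on_measurable[OF f] by measurable
  then show ?thesis
    using f unfolding L2_on_def set_borel_measurable_def
    by (simp add: power_mult_distrib mult.left_commute)
qed

lemma L2_on_zero: "L2_on S (\<lambda>t. 0)"
  unfolding L2_on_def set_borel_measurable_def set_integrable_def by simp

lemma L2_on_sum: "(\<And>i. i \<in> I \<Longrightarrow> L2_on S (f i)) \<Longrightarrow> L2_on S (\<lambda>t. \<Sum>i\<in>I. f i t)"
proof (induction I rule: infinite_finite_induct)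
  case (insert i I)
  then show ?case by (simp add: L2_on_add)
qed (simp_all add: L2_on_zero)

lemma L2_on_inner:
  "(\<And>i. L2_on S (\<lambda>t. \<phi> t $ i)) \<Longrightarrow> L2_on S (\<lambda>t. c \<bullet> (\<phi> t :: real ^ 'm::finite))"
  unfolding inner_vec_def by (simp add: L2_on_sum L2_on_cmult)

lemma L2_on_indicator:
  assumes f: "L2_on S f" and B: "B \<in> sets lborel"
  shows "L2_on S (\<lambda>t. indicator B t * f t)"
proof -
  have "(\<lambda>t. indicator B t * (indicator S t * f t)) \<in> borel_measurable lborel"
    using L2_on_measurable[OF f] B by measurable
  moreover have "integrable lborel (\<lambda>t. indicator B t *\<^sub>R (indicator S t *\<^sub>R (f t)\<^sup>2))"
    using f unfolding L2_on_def set_integrable_def by (intro integrable_mult_indicator[OF B]) simp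
  moreover have "(\<lambda>t. indicator B t * (indicator S t * f t)) = (\<lambda>t. indicator S t *\<^sub>R (indicator B t * f t))"
    and "(\<lambda>t. indicator B t *\<^sub>R (indicator S t *\<^sub>R (f t)\<^sup>2)) = (\<lambda>t. indicator S t *\<^sub>R (indicator B t * f t)\<^sup>2)"
    by (auto split: split_indicator)
  ultimately show ?thesis
    unfolding L2_on_def set_borel_measurable_def set_integrable_def by argo
qed

lemma L2p_on_add: "L2p_on S x \<Longrightarrow> L2p_on S y \<Longrightarrow> L2p_on S (\<lambda>t. x t + y t)"
  unfolding L2p_on_def by (simp add: L2_on_add)

lemma ip_commute: "ip S x y = ip S y x"
  unfolding ip_def by (simp add: mult.commute)

lemma ip_add_left:
  assumes "L2p_on S x" "L2p_on S y" "L2p_on S z"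
  shows "ip S (\<lambda>t. x t + y t) z = ip S x z + ip S y z"
  using assms unfolding ip_def L2p_on_def
  by (simp add: distrib_right L2_on_mult_integrable sum.distrib)

lemma ip_add_right:
  "L2p_on S x \<Longrightarrow> L2p_on S y \<Longrightarrow> L2p_on S z \<Longrightarrow> ip S z (\<lambda>t. x t + y t) = ip S z x + ip S z y"
  using ip_add_left[of S x y z] by (simp only: ip_commute[of S z])

lemma ip_scaleR_left: "ip S (\<lambda>t. c *\<^sub>R x t) y = c * ip S x y"
  by (simp add: ip_def sum_distrib_left mult.assoc)

lemma parseval_ip:
  assumes f: "L2p_on S f" and h: "L2p_on S h" and e: "\<And>i. L2p_on S (e i)"
    and parseval: "\<And>x. L2p_on S x \<Longrightarrow> (\<lambda>i. (ip S x (e i))\<^sup>2) sums ip S x x"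
  shows "(\<lambda>i. ip S f (e i) * ip S h (e i)) sums ip S f h"
proof -
  have fh: "L2p_on S (\<lambda>t. f t + h t)" using f h by (rule L2p_on_add)
  have "(\<lambda>i. (ip S (\<lambda>t. f t + h t) (e i))\<^sup>2 - (ip S f (e i))\<^sup>2 - (ip S h (e i))\<^sup>2)
      sums (ip S (\<lambda>t. f t + h t) (\<lambda>t. f t + h t) - ip S f f - ip S h h)"
    by (intro sums_diff parseval fh f h)
  moreover have "(ip S (\<lambda>t. f t + h t) (e i))\<^sup>2 - (ip S f (e i))\<^sup>2 - (ip S h (e i))\<^sup>2
      = 2 * (ip S f (e i) * ip S h (e i))" for i
    unfolding ip_add_left[OF f h e] by (simp add: power2_sum)
  moreover have "ip S (\<lambda>t. f t + h t) (\<lambda>t. f t + h t) - ip S f f - ip S h h = 2 * ip S f h"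
    unfolding ip_add_left[OF f h fh] ip_add_right[OF f h f] ip_add_right[OF f h h] ip_commute[of S h f]
    by simp
  ultimately have "(\<lambda>i. 2 * (ip S f (e i) * ip S h (e i))) sums (2 * ip S f h)"
    by simp
  from sums_mult[OF this, of "1/2"] show ?thesis by simp
qed

section \<open>Cross-Gram matrices\<close>

lemma set_integrable_sum:
  fixes f :: "'i \<Rightarrow> 'a \<Rightarrow> real"
  shows "(\<And>i. i \<in> I \<Longrightarrow> set_integrable M S (f i)) \<Longrightarrow> set_integrable M S (\<lambda>t. \<Sum>i\<in>I. f i t)"
  unfolding set_integrable_def by (simp add: sum_distrib_left)

lemma set_integral_sum:
  fixes f :: "'i \<Rightarrow> 'a \<Rightarrow> real"
  assumes "\<And>i. i \<in> I \<Longrightarrow> set_integrable M S (f i)"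
  shows "(LINT t:S|M. (\<Sum>i\<in>I. f i t)) = (\<Sum>i\<in>I. LINT t:S|M. f i t)"
  using assms unfolding set_lebesgue_integral_def set_integrable_def
  by (simp add: sum_distrib_left Bochner_Integration.integral_sum)

lemma set_integral_cong_AE_integrable:
  fixes f g :: "'a \<Rightarrow> real"
  assumes "set_integrable M S f" "set_integrable M S g" "AE t in M. t \<in> S \<longrightarrow> f t = g t"
  shows "(LINT t:S|M. f t) = (LINT t:S|M. g t)"
  unfolding set_lebesgue_integral_def
proof (rule integral_cong_AE)
  show "(\<lambda>t. indicator S t *\<^sub>R f t) \<in> borel_measurable M" "(\<lambda>t. indicator S t *\<^sub>R g t) \<in> borel_measurable M"
    using assms(1,2) unfolding set_integrable_def by (simp_all add: borel_measurable_integrable)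
  show "AE t in M. indicator S t *\<^sub>R f t = indicator S t *\<^sub>R g t"
    using assms(3) by eventually_elim (simp split: split_indicator)
qed

lemma set_integral_inner_left:
  fixes \<phi> :: "real \<Rightarrow> real ^ 'm::finite"
  assumes "\<And>a. set_integrable lborel S (\<lambda>t. \<phi> t $ a * y t)"
  shows "(LINT t:S|lborel. (c \<bullet> \<phi> t) * y t) = c \<bullet> (\<chi> a. LINT t:S|lborel. \<phi> t $ a * y t)"
  using assms unfolding inner_vec_def
  by (simp add: sum_distrib_right mult.assoc set_integral_sum)

lemma vector_matrix_mult_nth: "(x v* M) $ j = column j M \<bullet> (x :: real ^ 'm::finite)"
  by (simp add: vector_matrix_mult_def column_def inner_vec_def mult.commute)

definition cross_gram :: "real set \<Rightarrow> (real \<Rightarrow> real ^ 'm) \<Rightarrow> (real \<Rightarrow> real ^ 'p) \<Rightarrow> real ^ 'p ^ 'm" where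
  "cross_gram S \<phi> \<psi> = (\<chi> a j. LINT t:S|lborel. \<phi> t $ a * \<psi> t $ j)"

lemma gram_eq_cross_gram: "gram S \<phi> = cross_gram S \<phi> \<phi>"
  unfolding gram_def cross_gram_def ..

lemma transpose_gram: "transpose (gram S \<phi>) = gram S \<phi>"
  by (simp add: transpose_def gram_def vec_eq_iff mult.commute)

lemma ip_transpose_mult:
  fixes \<phi> :: "real \<Rightarrow> real ^ 'm::finite" and \<psi> :: "real \<Rightarrow> real ^ 'p::finite"
  assumes "\<And>a j. set_integrable lborel S (\<lambda>t. \<phi> t $ a * \<psi> t $ j)"
  shows "ip S (\<lambda>t. transpose N *v \<phi> t) \<psi> = N \<bullet> cross_gram S \<phi> \<psi>"
proof -
  have "ip S (\<lambda>t. transpose N *v \<phi> t) \<psi> = (\<Sum>j\<in>UNIV. column j N \<bullet> (\<chi> a. LINT t:S|lborel. \<phi> t $ a * \<psi> t $ j))"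
    unfolding ip_def using assms by (simp add: vector_matrix_mult_nth set_integral_inner_left)
  also have "\<dots> = N \<bullet> cross_gram S \<phi> \<psi>"
    by (simp add: inner_vec_def column_def cross_gram_def sum.swap[of _ "UNIV :: 'p set"])
  finally show ?thesis .
qed

lemma set_integral_inner_mult_inner:
  fixes \<phi> :: "real \<Rightarrow> real ^ 'm::finite" and \<psi> :: "real \<Rightarrow> real ^ 'p::finite"
  assumes int: "\<And>a j. set_integrable lborel S (\<lambda>t. \<phi> t $ a * \<psi> t $ j)"
  shows "(LINT t:S|lborel. (c \<bullet> \<phi> t) * (d \<bullet> \<psi> t)) = c \<bullet> (cross_gram S \<phi> \<psi> *v d)"
proof -
  have "set_integrable lborel S (\<lambda>t. \<phi> t $ a * (d \<bullet> \<psi> t))" for a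
    unfolding inner_vec_def sum_distrib_left
    by (intro set_integrable_sum) (simp add: int mult.left_commute)
  then have "(LINT t:S|lborel. (c \<bullet> \<phi> t) * (d \<bullet> \<psi> t))
      = c \<bullet> (\<chi> a. LINT t:S|lborel. \<phi> t $ a * (d \<bullet> \<psi> t))"
    by (rule set_integral_inner_left)
  also have "(\<chi> a. LINT t:S|lborel. \<phi> t $ a * (d \<bullet> \<psi> t)) = cross_gram S \<phi> \<psi> *v d"
  proof -
    have "(LINT t:S|lborel. \<phi> t $ a * (d \<bullet> \<psi> t)) = (LINT t:S|lborel. (d \<bullet> \<psi> t) * \<phi> t $ a)" for a
      by (simp only: mult.commute)
    also have "\<dots> a = d \<bullet> (\<chi> j. LINT t:S|lborel. \<psi> t $ j * \<phi> t $ a)" for a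
      by (rule set_integral_inner_left) (simp only: int mult.commute)
    also have "\<dots> a = (cross_gram S \<phi> \<psi> *v d) $ a" for a
      by (simp add: inner_vec_def matrix_vector_mult_def cross_gram_def mult.commute)
    finally show ?thesis by (simp add: vec_eq_iff)
  qed
  finally show ?thesis .
qed

lemma L2p_on_transpose_mult:
  "(\<And>a. L2_on S (\<lambda>t. \<phi> t $ a)) \<Longrightarrow> L2p_on S (\<lambda>t. transpose N *v (\<phi> t :: real ^ 'm::finite))"
  unfolding L2p_on_def by (simp add: vector_matrix_mult_nth L2_on_inner)

lemma ip_cong_AE:
  assumes "L2p_on S x" "L2p_on S x'" "L2p_on S y" "AE t in lborel. t \<in> S \<longrightarrow> x t = x' t"
  shows "ip S x y = ip S x' y"
  unfolding ip_def
proof (intro sum.cong refl set_integral_cong_AE_integrable)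
  fix j
  show "set_integrable lborel S (\<lambda>t. x t $ j * y t $ j)" "set_integrable lborel S (\<lambda>t. x' t $ j * y t $ j)"
    using assms(1-3) unfolding L2p_on_def by (simp_all add: L2_on_mult_integrable)
  show "AE t in lborel. t \<in> S \<longrightarrow> x t $ j * y t $ j = x' t $ j * y t $ j"
    using assms(4) by eventually_elim simp
qed

lemma cov_op_separable:
  fixes \<phi> :: "real \<Rightarrow> real ^ 'm::finite" and \<psi> :: "real \<Rightarrow> real ^ 'p::finite"
  assumes "\<And>a j. set_integrable lborel S (\<lambda>t. \<phi> t $ a * \<psi> t $ j)"
  shows "cov_op S (\<lambda>s t. (\<phi> s \<bullet> (C *v \<phi> t)) *\<^sub>R R) \<psi> s
    = transpose (C ** cross_gram S \<phi> \<psi> ** transpose R) *v \<phi> s"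
proof -
  have "(\<Sum>j\<in>UNIV. LINT t:S|lborel. ((\<phi> s \<bullet> (C *v \<phi> t)) *\<^sub>R R) $ l $ j * \<psi> t $ j)
      = (\<Sum>j\<in>UNIV. R $ l $ j * ((\<phi> s v* C) \<bullet> column j (cross_gram S \<phi> \<psi>)))" for l
  proof -
    have "((\<phi> s \<bullet> (C *v \<phi> t)) *\<^sub>R R) $ l $ j * \<psi> t $ j = R $ l $ j * (((\<phi> s v* C) \<bullet> \<phi> t) * \<psi> t $ j)"
      for t j by (simp add: dot_lmul_matrix)
    then have "(\<Sum>j\<in>UNIV. LINT t:S|lborel. ((\<phi> s \<bullet> (C *v \<phi> t)) *\<^sub>R R) $ l $ j * \<psi> t $ j)
        = (\<Sum>j\<in>UNIV. R $ l $ j * (LINT t:S|lborel. ((\<phi> s v* C) \<bullet> \<phi> t) * \<psi> t $ j))"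
      by (simp only: set_integral_mult_right)
    then show ?thesis
      using assms by (simp add: set_integral_inner_left column_def cross_gram_def)
  qed
  also have "\<dots> l = (R *v ((\<phi> s v* C) v* cross_gram S \<phi> \<psi>)) $ l" for l
    by (simp add: matrix_vector_mult_def vector_matrix_mult_nth inner_commute)
  also have "\<dots> l = (transpose (C ** cross_gram S \<phi> \<psi> ** transpose R) *v \<phi> s) $ l" for l
    by (simp only: transpose_matrix_vector vector_matrix_mul_assoc[symmetric] vector_transpose_matrix)
  finally show ?thesis
    unfolding cov_op_def by (simp add: vec_eq_iff)
qed

lemma matrix_eq_0_if_AE_transpose_mult_eq_0:
  fixes \<phi> :: "real \<Rightarrow> real ^ 'm::finite"
  assumes phi_indep: "\<And>c. (AE t in lborel. t \<in> S \<longrightarrow> c \<bullet> \<phi> t = 0) \<Longrightarrow> c = 0"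
    and "AE t in lborel. t \<in> S \<longrightarrow> transpose N *v \<phi> t = 0"
  shows "N = 0"
proof -
  have "column j N = 0" for j
    using assms(2) by (intro phi_indep) (auto simp: vec_eq_iff vector_matrix_mult_nth elim: AE_mp)
  then show ?thesis
    by (simp add: vec_eq_iff column_def)
qed

lemma cross_gram_eq_gram_mult:
  fixes \<phi> :: "real \<Rightarrow> real ^ 'm::finite"
  assumes phi_L2: "\<And>a. L2_on S (\<lambda>t. \<phi> t $ a)"
    and psi: "L2p_on S \<psi>" and expansion: "AE t in lborel. t \<in> S \<longrightarrow> \<psi> t = transpose H *v \<phi> t"
  shows "cross_gram S \<phi> \<psi> = gram S \<phi> ** H"
proof -
  have phi_phi: "set_integrable lborel S (\<lambda>t. \<phi> t $ a * \<phi> t $ b)" for a b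
    using phi_L2 by (simp add: L2_on_mult_integrable)
  have "cross_gram S \<phi> \<psi> $ a $ j = (LINT t:S|lborel. (column j H \<bullet> \<phi> t) * \<phi> t $ a)" for a j
    unfolding cross_gram_def
  proof (simp, rule set_integral_cong_AE_integrable)
    show "set_integrable lborel S (\<lambda>t. \<phi> t $ a * \<psi> t $ j)"
      using phi_L2 psi unfolding L2p_on_def by (simp add: L2_on_mult_integrable)
    show "set_integrable lborel S (\<lambda>t. (column j H \<bullet> \<phi> t) * \<phi> t $ a)"
      using phi_L2 by (simp add: L2_on_mult_integrable L2_on_inner)
    show "AE t in lborel. t \<in> S \<longrightarrow> \<phi> t $ a * \<psi> t $ j = (column j H \<bullet> \<phi> t) * \<phi> t $ a"
      using expansion by eventually_elim (simp add: vector_matrix_mult_nth)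
  qed
  also have "\<dots> a j = (gram S \<phi> ** H) $ a $ j" for a j
    by (subst set_integral_inner_left[OF phi_phi])
      (simp add: gram_def matrix_matrix_mult_def inner_vec_def column_def mult.commute)
  finally show ?thesis by (simp add: vec_eq_iff)
qed

lemma invertible_gram:
  fixes \<phi> :: "real \<Rightarrow> real ^ 'm::finite"
  assumes phi_L2: "\<And>a. L2_on S (\<lambda>t. \<phi> t $ a)"
    and phi_indep: "\<And>c. (AE t in lborel. t \<in> S \<longrightarrow> c \<bullet> \<phi> t = 0) \<Longrightarrow> c = 0"
  shows "invertible (gram S \<phi>)"
proof -
  have "c = 0" if "gram S \<phi> *v c = 0" for c
  proof (rule phi_indep)
    have int: "set_integrable lborel S (\<lambda>t. (c \<bullet> \<phi> t) * (c \<bullet> \<phi> t))"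
      by (intro L2_on_mult_integrable L2_on_inner phi_L2)
    have "(LINT t:S|lborel. (c \<bullet> \<phi> t) * (c \<bullet> \<phi> t)) = 0"
      using that phi_L2 by (simp add: set_integral_inner_mult_inner L2_on_mult_integrable gram_eq_cross_gram[symmetric])
    then have "AE t in lborel. indicator S t * ((c \<bullet> \<phi> t) * (c \<bullet> \<phi> t)) = 0"
      using int unfolding set_lebesgue_integral_def set_integrable_def
      by (subst integral_nonneg_eq_0_iff_AE[symmetric]) auto
    then show "AE t in lborel. t \<in> S \<longrightarrow> c \<bullet> \<phi> t = 0"
      by eventually_elim (auto split: split_indicator)
  qed
  then show ?thesis
    unfolding invertible_left_inverse matrix_left_invertible_ker by blast
qed

section \<open>Matrix algebra\<close>

lemma inner_matrix_mult_left:
  fixes X :: "real ^ 'p::finite ^ 'm::finite" and P :: "real ^ 'n::finite ^ 'm" and Y :: "real ^ 'p ^ 'n"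
  shows "X \<bullet> (P ** Y) = (transpose P ** X) \<bullet> Y"
proof -
  have "X \<bullet> (P ** Y) = (\<Sum>a\<in>UNIV. \<Sum>j\<in>UNIV. \<Sum>b\<in>UNIV. X$a$j * P$a$b * Y$b$j)"
    by (simp add: inner_vec_def matrix_matrix_mult_def sum_distrib_left ac_simps)
  also have "\<dots> = (\<Sum>a\<in>UNIV. \<Sum>b\<in>UNIV. \<Sum>j\<in>UNIV. X$a$j * P$a$b * Y$b$j)"
    by (rule sum.cong[OF refl], rule sum.swap)
  also have "\<dots> = (\<Sum>b\<in>UNIV. \<Sum>a\<in>UNIV. \<Sum>j\<in>UNIV. X$a$j * P$a$b * Y$b$j)"
    by (rule sum.swap)
  also have "\<dots> = (\<Sum>b\<in>UNIV. \<Sum>j\<in>UNIV. \<Sum>a\<in>UNIV. X$a$j * P$a$b * Y$b$j)"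
    by (rule sum.cong[OF refl], rule sum.swap)
  also have "\<dots> = (transpose P ** X) \<bullet> Y"
    by (simp add: inner_vec_def matrix_matrix_mult_def transpose_def sum_distrib_right sum_distrib_left ac_simps)
  finally show ?thesis .
qed

lemma inner_matrix_mult_right:
  fixes X :: "real ^ 'p::finite ^ 'm::finite" and Q :: "real ^ 'p ^ 'n::finite" and Y :: "real ^ 'n ^ 'm"
  shows "X \<bullet> (Y ** Q) = (X ** transpose Q) \<bullet> Y"
proof -
  have "X \<bullet> (Y ** Q) = (\<Sum>a\<in>UNIV. \<Sum>j\<in>UNIV. \<Sum>b\<in>UNIV. X$a$j * Y$a$b * Q$b$j)"
    by (simp add: inner_vec_def matrix_matrix_mult_def sum_distrib_left ac_simps)
  also have "\<dots> = (\<Sum>a\<in>UNIV. \<Sum>b\<in>UNIV. \<Sum>j\<in>UNIV. X$a$j * Y$a$b * Q$b$j)"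
    by (rule sum.cong[OF refl], rule sum.swap)
  also have "\<dots> = (X ** transpose Q) \<bullet> Y"
    by (simp add: inner_vec_def matrix_matrix_mult_def transpose_def sum_distrib_right sum_distrib_left ac_simps)
  finally show ?thesis .
qed

lemma
  fixes A :: "real ^ 'n::finite ^ 'n"
  assumes "invertible A"
  shows matrix_inv_right: "A ** matrix_inv A = mat 1"
    and matrix_inv_left: "matrix_inv A ** A = mat 1"
  using someI_ex[OF assms[unfolded invertible_def]] unfolding matrix_inv_def by auto

lemma matrix_inv_unique:
  fixes A B :: "real ^ 'n::finite ^ 'n"
  assumes "A ** B = mat 1"
  shows "matrix_inv A = B"
proof -
  have "invertible A" using assms invertible_right_inverse by blast
  then have "matrix_inv A = (matrix_inv A ** A) ** B"
    by (simp add: assms matrix_mul_assoc[symmetric])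
  then show ?thesis by (simp add: matrix_inv_left \<open>invertible A\<close>)
qed

lemma pos_def_invertible: "pos_def S \<Longrightarrow> invertible S"
  unfolding invertible_left_inverse matrix_left_invertible_ker pos_def_def
  by (metis inner_zero_right less_irrefl)

lemma pos_def_eigenvalue_pos:
  assumes "pos_def S" "S *v x = c *\<^sub>R x" "x \<noteq> 0"
  shows "0 < c"
proof -
  have "0 < x \<bullet> (S *v x)" using assms unfolding pos_def_def by blast
  then show ?thesis
    using assms(2) inner_ge_zero[of x] by (auto simp: zero_less_mult_iff)
qed

lemma matrix_inv_eigenbasis:
  fixes S :: "real ^ 'n::finite ^ 'n" and v :: "'n \<Rightarrow> real ^ 'n"
  assumes eig: "\<And>j. S *v v j = lam j *\<^sub>R v j"
    and orth: "\<And>i j. v i \<bullet> v j = (if i = j then 1 else 0)"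
    and nz: "\<And>j. lam j \<noteq> 0"
  shows "matrix_inv S = (\<chi> a b. \<Sum>j\<in>UNIV. v j $ a * v j $ b / lam j)"
proof (rule matrix_inv_unique)
  define V :: "real ^ 'n ^ 'n" where "V = (\<chi> a j. v j $ a)"
  have "transpose V ** V = mat 1"
    using orth by (simp add: V_def matrix_matrix_mult_def transpose_def mat_def vec_eq_iff inner_vec_def)
  then have VV: "V ** transpose V = mat 1"
    using matrix_left_right_inverse by blast
  have "(S ** (\<chi> a b. \<Sum>j\<in>UNIV. v j $ a * v j $ b / lam j)) $ a $ b
      = (\<Sum>c\<in>UNIV. \<Sum>j\<in>UNIV. S $ a $ c * v j $ c * (v j $ b / lam j))" for a b
    by (simp add: matrix_matrix_mult_def sum_distrib_left mult.assoc)
  also have "\<dots> a b = (\<Sum>j\<in>UNIV. \<Sum>c\<in>UNIV. S $ a $ c * v j $ c * (v j $ b / lam j))" for a b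
    by (rule sum.swap)
  also have "\<dots> a b = (\<Sum>j\<in>UNIV. (S *v v j) $ a * (v j $ b / lam j))" for a b
    by (simp add: matrix_vector_mult_def sum_distrib_right sum_divide_distrib)
  also have "\<dots> a b = (V ** transpose V) $ a $ b" for a b
    using nz by (simp add: eig V_def matrix_matrix_mult_def transpose_def)
  finally show "S ** (\<chi> a b. \<Sum>j\<in>UNIV. v j $ a * v j $ b / lam j) = mat 1"
    using VV by (simp add: vec_eq_iff)
qed

lemma column_matrix_mult: "column k (M ** N) = M *v column k (N :: real ^ 'p::finite ^ 'n::finite)"
  by (simp add: column_def matrix_matrix_mult_def matrix_vector_mult_def vec_eq_iff)

lemma matrix_vector_mult_sum_scaleR:
  fixes M :: "real ^ 'n::finite ^ 'm::finite"
  shows "M *v (\<Sum>j\<in>J. c j *\<^sub>R x j) = (\<Sum>j\<in>J. c j *\<^sub>R (M *v x j))"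
  by (simp add: linear_sum[OF matrix_vector_mul_linear] o_def matrix_vector_mult_scaleR)

lemma column_matrix_inv_eigenbasis:
  fixes S :: "real ^ 'n::finite ^ 'n" and v :: "'n \<Rightarrow> real ^ 'n"
  assumes "\<And>j. S *v v j = lam j *\<^sub>R v j"
    and "\<And>i j. v i \<bullet> v j = (if i = j then 1 else 0)"
    and "\<And>j. lam j \<noteq> 0"
  shows "column k (matrix_inv S) = (\<Sum>j\<in>UNIV. (v j $ k / lam j) *\<^sub>R v j)"
  unfolding matrix_inv_eigenbasis[OF assms] by (simp add: column_def vec_eq_iff mult.commute)

lemma card_le_DIM_if_biorthogonal:
  fixes G U :: "'i \<Rightarrow> 'a::euclidean_space"
  assumes I: "finite I" and biorth: "\<And>i j. i \<in> I \<Longrightarrow> j \<in> I \<Longrightarrow> G i \<bullet> U j = (if i = j then 1 else 0)"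
  shows "card I \<le> DIM('a)"
proof -
  have inj: "inj_on G I"
    by (rule inj_onI) (metis biorth zero_neq_one)
  have "independent (G ` I)"
  proof
    assume "dependent (G ` I)"
    then obtain T c where T: "finite T" "T \<subseteq> G ` I" "(\<Sum>x\<in>T. c x *\<^sub>R x) = 0" and "\<exists>x\<in>T. c x \<noteq> 0"
      unfolding real_vector.dependent_explicit by blast
    then obtain j where j: "j \<in> I" "G j \<in> T" "c (G j) \<noteq> 0" by blast
    have dual: "x \<bullet> U j = (if x = G j then 1 else 0)" if "x \<in> T" for x
      using that T(2) j(1) inj biorth by (auto simp: inj_on_eq_iff)
    have "0 = (\<Sum>x\<in>T. c x *\<^sub>R x) \<bullet> U j"
      using T(3) by simp
    also have "\<dots> = (\<Sum>x\<in>T. if x = G j then c x else 0)"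
      unfolding inner_sum_left by (intro sum.cong) (simp_all add: dual)
    also have "\<dots> = c (G j)"
      using T(1) j(2) by simp
    finally show False using j(3) by simp
  qed
  then have "card (G ` I) \<le> DIM('a)"
    using independent_bound by blast
  then show ?thesis
    using card_image[OF inj] by simp
qed

lemma decseq_eq_0_if_card_nonzero_le:
  fixes \<pi> :: "nat \<Rightarrow> real"
  assumes dec: "decseq \<pi>" and bound: "\<And>I. finite I \<Longrightarrow> (\<And>i. i \<in> I \<Longrightarrow> \<pi> i \<noteq> 0) \<Longrightarrow> card I \<le> N"
    and "N \<le> n"
  shows "\<pi> n = 0"
proof (rule ccontr)
  assume "\<pi> n \<noteq> 0"
  then consider "\<pi> n > 0" | "\<pi> n < 0" by linarith
  then show False
  proof cases
    case 1
    have "\<pi> i \<noteq> 0" if "i \<in> {0..n}" for i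
      using decseqD[OF dec, of i n] that 1 by simp
    then have "card {0..n} \<le> N" by (intro bound) auto
    then show False using \<open>N \<le> n\<close> by simp
  next
    case 2
    have "\<pi> i \<noteq> 0" if "i \<in> {n..n + N}" for i
      using decseqD[OF dec, of n i] that 2 by simp
    then have "card {n..n + N} \<le> N" by (intro bound) auto
    then show False by simp
  qed
qed

section \<open>Shapley values of squared additive games\<close>

definition shapley_weight :: "nat \<Rightarrow> nat \<Rightarrow> real" where
  "shapley_weight n s = fact s * fact (n - s - 1) / fact n"

lemma shapley_eq_weighted_sum:
  fixes v :: "'c::finite set \<Rightarrow> real"
  shows "shapley v c = (\<Sum>Q\<in>Pow (UNIV - {c}). shapley_weight CARD('c) (card Q) * (v (insert c Q) - v Q))"
  unfolding shapley_def shapley_weight_def ..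

lemma shapley_sum: "shapley (\<lambda>Q. \<Sum>i\<in>I. v i Q) c = (\<Sum>i\<in>I. shapley (v i) c)"
  unfolding shapley_eq_weighted_sum
  by (simp add: sum_subtractf[symmetric] sum_distrib_left right_diff_distrib sum.swap[of _ I])

lemma shapley_cmult: "shapley (\<lambda>Q. x * v Q) c = x * shapley v c"
  unfolding shapley_eq_weighted_sum by (simp add: sum_distrib_left algebra_simps)

lemma sum_Pow_card:
  assumes "finite S"
  shows "(\<Sum>Q\<in>Pow S. g (card Q)) = (\<Sum>s\<le>card S. real (card S choose s) * g s)"
proof -
  have "(\<Sum>Q\<in>Pow S. g (card Q)) = (\<Sum>s\<le>card S. \<Sum>Q\<in>{Q\<in>Pow S. card Q = s}. g (card Q))"
    by (rule sum.group[symmetric]) (use assms in \<open>auto intro: card_mono\<close>)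
  also have "\<dots> = (\<Sum>s\<le>card S. real (card S choose s) * g s)"
  proof (rule sum.cong[OF refl])
    fix s
    have "(\<Sum>Q\<in>{Q\<in>Pow S. card Q = s}. g (card Q)) = (\<Sum>Q\<in>{Q. Q \<subseteq> S \<and> card Q = s}. g s)"
      by (rule sum.cong) auto
    then show "(\<Sum>Q\<in>{Q\<in>Pow S. card Q = s}. g (card Q)) = real (card S choose s) * g s"
      by (simp add: n_subsets[OF assms])
  qed
  finally show ?thesis .
qed

lemma sum_shapley_weight:
  assumes "finite S"
  shows "(\<Sum>Q\<in>Pow S. shapley_weight (Suc (card S)) (card Q)) = 1"
proof -
  let ?m = "card S"
  have "real (?m choose s) * shapley_weight (Suc ?m) s = 1 / real (Suc ?m)" if "s \<le> ?m" for s
  proof -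
    have "real (?m choose s) * (fact s * fact (?m - s)) = fact ?m"
      using binomial_fact_lemma[OF that] by (metis mult.commute of_nat_fact of_nat_mult)
    then have "real (?m choose s) * shapley_weight (Suc ?m) s = fact ?m / fact (Suc ?m)"
      by (simp add: shapley_weight_def)
    also have "\<dots> = 1 / real (Suc ?m)"
      by (simp add: fact_Suc[of ?m] del: fact_Suc)
    finally show ?thesis .
  qed
  then show ?thesis
    by (simp add: sum_Pow_card[OF assms])
qed

lemma sum_shapley_weight_mem:
  assumes S: "finite S" and x: "x \<in> S"
  shows "(\<Sum>Q\<in>{Q\<in>Pow S. x \<in> Q}. shapley_weight (Suc (card S)) (card Q)) = 1/2"
proof -
  \<comment> \<open>Complementation in S swaps the coalitions containing x with those avoiding it
    and preserves the weights.\<close>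
  let ?w = "\<lambda>Q. shapley_weight (Suc (card S)) (card Q)"
  have "(\<Sum>Q\<in>{Q\<in>Pow S. x \<in> Q}. ?w Q) = (\<Sum>Q\<in>{Q\<in>Pow S. x \<notin> Q}. ?w Q)"
  proof (rule sum.reindex_bij_witness[where i = "\<lambda>Q. S - Q" and j = "\<lambda>Q. S - Q"])
    fix Q assume "Q \<in> {Q\<in>Pow S. x \<in> Q}"
    moreover have "card (S - Q) = card S - card Q" if "Q \<subseteq> S"
      using S that by (simp add: card_Diff_subset finite_subset)
    moreover have "card Q \<le> card S" if "Q \<subseteq> S"
      using S that by (simp add: card_mono)
    ultimately show "?w (S - Q) = ?w Q"
      by (auto simp: shapley_weight_def)
  qed (use x in auto)
  moreover have "(\<Sum>Q\<in>Pow S. ?w Q) = (\<Sum>Q\<in>{Q\<in>Pow S. x \<in> Q}. ?w Q) + (\<Sum>Q\<in>{Q\<in>Pow S. x \<notin> Q}. ?w Q)"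
    using sum.If_cases[of "Pow S" "\<lambda>Q. x \<in> Q" ?w ?w] S by (simp add: Int_def)
  ultimately show ?thesis
    using sum_shapley_weight[OF S] by simp
qed

lemma shapley_square_of_sum:
  fixes b :: "'c::finite \<Rightarrow> real"
  shows "shapley (\<lambda>Q. (\<Sum>x\<in>Q. b x)\<^sup>2) c = b c * (\<Sum>x\<in>UNIV. b x)"
proof -
  define S where "S = UNIV - {c}"
  define w where "w Q = shapley_weight (Suc (card S)) (card Q)" for Q :: "'c set"
  have card: "CARD('c) = Suc (card S)"
    unfolding S_def by (simp add: card_Diff_singleton)
  have "(\<Sum>x\<in>insert c Q. b x)\<^sup>2 - (\<Sum>x\<in>Q. b x)\<^sup>2
      = (b c)\<^sup>2 + 2 * b c * (\<Sum>x\<in>S. if x \<in> Q then b x else 0)" if "Q \<in> Pow S" for Q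
  proof -
    have "c \<notin> Q" "(\<Sum>x\<in>S. if x \<in> Q then b x else 0) = (\<Sum>x\<in>Q. b x)"
      using that by (auto simp: S_def sum.If_cases Int_absorb1)
    then show ?thesis by (simp add: power2_sum algebra_simps)
  qed
  moreover have "w Q * ((b c)\<^sup>2 + 2 * b c * (\<Sum>x\<in>S. if x \<in> Q then b x else 0))
      = (b c)\<^sup>2 * w Q + 2 * b c * (\<Sum>x\<in>S. if x \<in> Q then w Q * b x else 0)" for Q
  proof -
    have "w Q * (\<Sum>x\<in>S. if x \<in> Q then b x else 0) = (\<Sum>x\<in>S. if x \<in> Q then w Q * b x else 0)"
      by (auto simp: sum_distrib_left intro!: sum.cong)
    then show ?thesis by (simp add: algebra_simps)
  qed
  ultimately have "shapley (\<lambda>Q. (\<Sum>x\<in>Q. b x)\<^sup>2) c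
      = (\<Sum>Q\<in>Pow S. (b c)\<^sup>2 * w Q + 2 * b c * (\<Sum>x\<in>S. if x \<in> Q then w Q * b x else 0))"
    unfolding shapley_eq_weighted_sum card S_def[symmetric] w_def[symmetric] by simp
  also have "\<dots> = (b c)\<^sup>2 * (\<Sum>Q\<in>Pow S. w Q)
      + 2 * b c * (\<Sum>x\<in>S. \<Sum>Q\<in>Pow S. if x \<in> Q then w Q * b x else 0)"
    by (simp add: sum.distrib sum_distrib_left sum.swap[of _ "Pow S"])
  also have "(\<Sum>x\<in>S. \<Sum>Q\<in>Pow S. if x \<in> Q then w Q * b x else 0)
      = (\<Sum>x\<in>S. b x * (\<Sum>Q\<in>{Q\<in>Pow S. x \<in> Q}. w Q))"
    by (simp add: sum.inter_filter[symmetric] sum_distrib_left mult.commute)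
  also have "\<dots> = (\<Sum>x\<in>S. b x / 2)"
  proof (rule sum.cong[OF refl])
    fix x assume "x \<in> S"
    then show "b x * (\<Sum>Q\<in>{Q\<in>Pow S. x \<in> Q}. w Q) = b x / 2"
      unfolding w_def using sum_shapley_weight_mem[of S x] by simp
  qed
  also have "\<dots> = (\<Sum>x\<in>S. b x) / 2"
    by (rule sum_divide_distrib[symmetric])
  also have "(\<Sum>Q\<in>Pow S. w Q) = 1"
    by (simp add: w_def sum_shapley_weight)
  also have "(b c)\<^sup>2 * 1 + 2 * b c * ((\<Sum>x\<in>S. b x) / 2) = b c * (b c + (\<Sum>x\<in>S. b x))"
    by (simp add: power2_eq_square algebra_simps)
  also have "b c + (\<Sum>x\<in>S. b x) = (\<Sum>x\<in>UNIV. b x)"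
    unfolding S_def by (simp add: sum.remove[of UNIV c])
  finally show ?thesis .
qed

section \<open>Masked processes on a partition\<close>

definition cell_ip :: "('d \<Rightarrow> real set) \<Rightarrow> (real \<Rightarrow> real ^ 'p) \<Rightarrow> (real \<Rightarrow> real ^ 'p) \<Rightarrow> 'p \<times> 'd \<Rightarrow> real" where
  "cell_ip Tp x y c = (LINT t:Tp (snd c)|lborel. x t $ fst c * y t $ fst c)"

definition cell_restrict :: "('d \<Rightarrow> real set) \<Rightarrow> (real \<Rightarrow> real ^ 'p) \<Rightarrow> 'p \<times> 'd \<Rightarrow> real \<Rightarrow> real ^ 'p" where
  "cell_restrict Tp x c t = (\<chi> j. if j = fst c then indicator (Tp (snd c)) t * x t $ j else 0)"

locale measurable_partition =
  fixes S :: "real set" and Tp :: "'d::finite \<Rightarrow> real set"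
  assumes sets_cell [measurable]: "Tp b \<in> sets lborel"
    and disjoint_cells: "b \<noteq> b' \<Longrightarrow> Tp b \<inter> Tp b' = {}"
    and Union_cells: "(\<Union>b. Tp b) = S"
begin

lemma cell_subset: "Tp b \<subseteq> S"
  using Union_cells by blast

lemma set_integral_indicator_cell:
  fixes f :: "real \<Rightarrow> real"
  assumes "set_integrable lborel S f"
  shows "set_integrable lborel S (\<lambda>t. indicator (Tp b) t * f t)"
    and "(LINT t:S|lborel. indicator (Tp b) t * f t) = (LINT t:Tp b|lborel. f t)"
proof -
  have eq: "indicator S t * (indicator (Tp b) t * f t) = indicator (Tp b) t * f t" for t
    using cell_subset[of b] by (auto split: split_indicator)
  have "integrable lborel (\<lambda>t. indicator (Tp b) t *\<^sub>R (indicator S t *\<^sub>R f t))"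
    using assms unfolding set_integrable_def by (intro integrable_mult_indicator[OF sets_cell])
  then show "set_integrable lborel S (\<lambda>t. indicator (Tp b) t * f t)"
    unfolding set_integrable_def by (simp add: eq mult.left_commute)
  show "(LINT t:S|lborel. indicator (Tp b) t * f t) = (LINT t:Tp b|lborel. f t)"
    unfolding set_lebesgue_integral_def by (simp add: eq)
qed

lemma sum_cell_ip:
  assumes "L2p_on S x" "L2p_on S y"
  shows "(\<Sum>c\<in>UNIV. cell_ip Tp x y c) = ip S x y"
proof -
  have int: "set_integrable lborel S (\<lambda>t. x t $ j * y t $ j)" for j
    using assms unfolding L2p_on_def by (simp add: L2_on_mult_integrable)
  have "(LINT t:S|lborel. x t $ j * y t $ j) = (\<Sum>b\<in>UNIV. LINT t:Tp b|lborel. x t $ j * y t $ j)" for j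
    unfolding Union_cells[symmetric]
    using set_integrable_subset[OF int sets_cell cell_subset] disjoint_cells sets_cell
    by (intro set_integral_finite_Union) (auto simp: disjoint_family_on_def)
  then have "ip S x y = (\<Sum>j\<in>UNIV. \<Sum>b\<in>UNIV. cell_ip Tp x y (j, b))"
    unfolding ip_def cell_ip_def by simp
  then show ?thesis
    unfolding sum.cartesian_product by simp
qed

lemma L2p_on_cell_restrict:
  assumes "L2p_on S x"
  shows "L2p_on S (cell_restrict Tp x c)"
  unfolding L2p_on_def
proof
  fix j
  show "L2_on S (\<lambda>t. cell_restrict Tp x c t $ j)"
    using assms L2_on_indicator[OF _ sets_cell] unfolding L2p_on_def cell_restrict_def
    by (cases "j = fst c") (simp_all add: L2_on_zero)
qed

lemma ip_cell_restrict:
  assumes "L2p_on S x" "L2p_on S y"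
  shows "ip S (cell_restrict Tp x c) y = cell_ip Tp x y c"
proof -
  have "ip S (cell_restrict Tp x c) y
      = (\<Sum>j\<in>UNIV. if j = fst c then LINT t:S|lborel. indicator (Tp (snd c)) t * (x t $ j * y t $ j) else 0)"
    unfolding ip_def cell_restrict_def by (intro sum.cong) (simp_all add: mult.assoc)
  moreover have "set_integrable lborel S (\<lambda>t. x t $ fst c * y t $ fst c)"
    using assms unfolding L2p_on_def by (simp add: L2_on_mult_integrable)
  ultimately show ?thesis
    unfolding cell_ip_def by (simp add: set_integral_indicator_cell)
qed

lemma cell_ip_transpose_mult:
  fixes \<phi> :: "real \<Rightarrow> real ^ 'm::finite"
  assumes "\<And>a b. set_integrable lborel (Tp (snd c)) (\<lambda>t. \<phi> t $ a * \<phi> t $ b)"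
  shows "cell_ip Tp (\<lambda>t. transpose N *v \<phi> t) (\<lambda>t. transpose N' *v \<phi> t) c
    = column (fst c) N \<bullet> (gram (Tp (snd c)) \<phi> *v column (fst c) N')"
  unfolding cell_ip_def gram_eq_cross_gram using assms
  by (simp add: vector_matrix_mult_nth set_integral_inner_mult_inner)

lemma masked_diff_nth:
  "(masked Tp X \<mu> Q t - \<mu> t) $ j = (\<Sum>b\<in>{b. (j, b) \<in> Q}. indicator (Tp b) t) * (X t - \<mu> t) $ j"
proof (cases "\<exists>b. (j, b) \<in> Q \<and> t \<in> Tp b")
  case True
  then obtain b where b: "(j, b) \<in> Q" "t \<in> Tp b" by blast
  then have "(\<Sum>b'\<in>{b. (j, b) \<in> Q}. indicator (Tp b') t) = (\<Sum>b'\<in>{b. (j, b) \<in> Q}. if b' = b then 1 else 0 :: real)"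
    using disjoint_cells by (intro sum.cong) (auto split: split_indicator)
  then show ?thesis using True b by (simp add: masked_def)
qed (auto simp: masked_def split: split_indicator intro!: sum.neutral)

lemma ip_masked_diff:
  assumes "L2p_on S (\<lambda>t. X t - \<mu> t)" "L2p_on S y"
  shows "ip S (\<lambda>t. masked Tp X \<mu> Q t - \<mu> t) y = (\<Sum>c\<in>Q. cell_ip Tp (\<lambda>t. X t - \<mu> t) y c)"
proof -
  have "ip S (\<lambda>t. masked Tp X \<mu> Q t - \<mu> t) y = (\<Sum>j\<in>UNIV. \<Sum>b\<in>{b. (j, b) \<in> Q}. cell_ip Tp (\<lambda>t. X t - \<mu> t) y (j, b))"
    unfolding ip_def
  proof (rule sum.cong[OF refl])
    fix j
    have int: "set_integrable lborel S (\<lambda>t. (X t - \<mu> t) $ j * y t $ j)"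
      using assms unfolding L2p_on_def by (simp add: L2_on_mult_integrable)
    have "(masked Tp X \<mu> Q t - \<mu> t) $ j * y t $ j
        = (\<Sum>b\<in>{b. (j, b) \<in> Q}. indicator (Tp b) t * ((X t - \<mu> t) $ j * y t $ j))" for t
      by (simp only: masked_diff_nth sum_distrib_right mult.assoc)
    then have "(LINT t:S|lborel. (masked Tp X \<mu> Q t - \<mu> t) $ j * y t $ j)
        = (\<Sum>b\<in>{b. (j, b) \<in> Q}. LINT t:S|lborel. indicator (Tp b) t * ((X t - \<mu> t) $ j * y t $ j))"
      using set_integral_indicator_cell(1)[OF int] by (simp only: set_integral_sum)
    then show "(LINT t:S|lborel. (masked Tp X \<mu> Q t - \<mu> t) $ j * y t $ j)
        = (\<Sum>b\<in>{b. (j, b) \<in> Q}. cell_ip Tp (\<lambda>t. X t - \<mu> t) y (j, b))"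
      unfolding cell_ip_def set_integral_indicator_cell(2)[OF int] by simp
  qed
  also have "\<dots> = (\<Sum>c\<in>Q. cell_ip Tp (\<lambda>t. X t - \<mu> t) y c)"
    by (subst sum.Sigma) (auto intro!: sum.cong)
  finally show ?thesis .
qed

lemma shapley_fMMD2_masked:
  assumes "L2p_on S (\<lambda>t. X t - \<mu> t)" "\<And>i. L2p_on S (\<psi> i)"
  shows "shapley (\<lambda>Q. fMMD2 S \<psi> \<pi> N (masked Tp X \<mu> Q) \<mu>) c
    = (\<Sum>i<N. cell_ip Tp (\<lambda>t. X t - \<mu> t) (\<psi> i) c * ip S (\<lambda>t. X t - \<mu> t) (\<psi> i) / \<pi> i)"
proof -
  have "shapley (\<lambda>Q. fMMD2 S \<psi> \<pi> N (masked Tp X \<mu> Q) \<mu>) c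
      = shapley (\<lambda>Q. \<Sum>i<N. (1 / \<pi> i) * (\<Sum>d\<in>Q. cell_ip Tp (\<lambda>t. X t - \<mu> t) (\<psi> i) d)\<^sup>2) c"
    unfolding fMMD2_def using assms by (simp add: ip_masked_diff)
  also have "\<dots> = (\<Sum>i<N. (1 / \<pi> i) * (cell_ip Tp (\<lambda>t. X t - \<mu> t) (\<psi> i) c
      * (\<Sum>d\<in>UNIV. cell_ip Tp (\<lambda>t. X t - \<mu> t) (\<psi> i) d)))"
    by (simp only: shapley_sum shapley_cmult shapley_square_of_sum)
  finally show ?thesis
    using assms by (simp add: sum_cell_ip)
qed

end

section \<open>Separable covariance operators of finite rank\<close>

(* C and R play the roles of the column and row covariances Scol and Srow. *)
locale separable_eigensystem =
  fixes S :: "real set" and \<phi> :: "real \<Rightarrow> real ^ 'm::finite"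
    and C :: "real ^ 'm ^ 'm" and R :: "real ^ 'p::finite ^ 'p"
    and \<psi> :: "nat \<Rightarrow> real \<Rightarrow> real ^ 'p" and \<pi> :: "nat \<Rightarrow> real"
  assumes phi_L2: "\<And>a. L2_on S (\<lambda>t. \<phi> t $ a)"
    and phi_indep: "\<And>c. (AE t in lborel. t \<in> S \<longrightarrow> c \<bullet> \<phi> t = 0) \<Longrightarrow> c = 0"
    and pos_def_C: "pos_def C" and pos_def_R: "pos_def R"
    and psi_L2: "\<And>i. L2p_on S (\<psi> i)"
    and psi_orthonormal: "\<And>i j. ip S (\<psi> i) (\<psi> j) = (if i = j then 1 else 0)"
    and psi_eigen: "\<And>i. AE t in lborel. t \<in> S \<longrightarrow>
      cov_op S (\<lambda>s t. (\<phi> s \<bullet> (C *v \<phi> t)) *\<^sub>R R) (\<psi> i) t = \<pi> i *\<^sub>R \<psi> i t"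
    and pi_decseq: "decseq \<pi>"
    and psi_parseval: "\<And>x. L2p_on S x \<Longrightarrow> (\<lambda>i. (ip S x (\<psi> i))\<^sup>2) sums ip S x x"
begin

lemma phi_psi_integrable: "set_integrable lborel S (\<lambda>t. \<phi> t $ a * \<psi> i t $ j)"
  using phi_L2 psi_L2 unfolding L2p_on_def by (simp add: L2_on_mult_integrable)

lemma eigenfunction_expansion:
  "AE t in lborel. t \<in> S \<longrightarrow> \<pi> i *\<^sub>R \<psi> i t = transpose (C ** cross_gram S \<phi> (\<psi> i) ** transpose R) *v \<phi> t"
  using psi_eigen[of i] by eventually_elim (simp add: cov_op_separable phi_psi_integrable)

lemma eigen_cross_gram:
  "\<pi> i *\<^sub>R cross_gram S \<phi> (\<psi> i) = gram S \<phi> ** (C ** cross_gram S \<phi> (\<psi> i) ** transpose R)"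
proof -
  have "L2p_on S (\<lambda>t. \<pi> i *\<^sub>R \<psi> i t)"
    using psi_L2[of i] unfolding L2p_on_def by (simp add: L2_on_cmult)
  then have "cross_gram S \<phi> (\<lambda>t. \<pi> i *\<^sub>R \<psi> i t) = gram S \<phi> ** (C ** cross_gram S \<phi> (\<psi> i) ** transpose R)"
    by (rule cross_gram_eq_gram_mult[OF phi_L2 _ eigenfunction_expansion])
  then show ?thesis
    by (simp add: cross_gram_def vec_eq_iff mult.left_commute)
qed

lemma invertible_C: "invertible C" and invertible_R: "invertible R"
  using pos_def_C pos_def_R by (simp_all add: pos_def_invertible)

lemma cross_gram_eq_0:
  assumes "\<pi> i = 0"
  shows "cross_gram S \<phi> (\<psi> i) = 0"
proof -
  let ?U = "cross_gram S \<phi> (\<psi> i)"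
  have "AE t in lborel. t \<in> S \<longrightarrow> transpose (C ** ?U ** transpose R) *v \<phi> t = 0"
    using eigenfunction_expansion[of i] by eventually_elim (metis assms scaleR_zero_left)
  then have H0: "C ** ?U ** transpose R = 0"
    using matrix_eq_0_if_AE_transpose_mult_eq_0[of S \<phi> "C ** ?U ** transpose R"] phi_indep by blast
  have "invertible (transpose R)"
    using invertible_R pos_def_R by (simp add: pos_def_def)
  then have "?U = (matrix_inv C ** C) ** ?U ** (transpose R ** matrix_inv (transpose R))"
    by (simp add: matrix_inv_left invertible_C matrix_inv_right)
  also have "\<dots> = matrix_inv C ** (C ** ?U ** transpose R) ** matrix_inv (transpose R)"
    by (simp only: matrix_mul_assoc)
  also have "\<dots> = 0"
    unfolding H0 by (simp add: matrix_matrix_mult_def vec_eq_iff)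
  finally show ?thesis .
qed

lemma eigen_dual:
  "(C ** cross_gram S \<phi> (\<psi> i) ** transpose R) \<bullet> cross_gram S \<phi> (\<psi> j) = (if i = j then \<pi> i else 0)"
proof -
  have "(C ** cross_gram S \<phi> (\<psi> i) ** transpose R) \<bullet> cross_gram S \<phi> (\<psi> j)
      = ip S (\<lambda>t. transpose (C ** cross_gram S \<phi> (\<psi> i) ** transpose R) *v \<phi> t) (\<psi> j)"
    by (rule ip_transpose_mult[symmetric]) (rule phi_psi_integrable)
  also have "\<dots> = ip S (\<lambda>t. \<pi> i *\<^sub>R \<psi> i t) (\<psi> j)"
    using psi_L2 phi_L2 eigenfunction_expansion[of i]
    by (intro ip_cong_AE L2p_on_transpose_mult) (auto simp: L2p_on_def L2_on_cmult)
  also have "\<dots> = (if i = j then \<pi> i else 0)"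
    by (simp add: ip_scaleR_left psi_orthonormal)
  finally show ?thesis .
qed

lemma eigenvalue_eq_0:
  assumes "CARD('m) * CARD('p) \<le> n"
  shows "\<pi> n = 0"
proof (rule decseq_eq_0_if_card_nonzero_le[OF pi_decseq _ assms])
  fix I assume "finite I" and nz: "\<And>i. i \<in> I \<Longrightarrow> \<pi> i \<noteq> 0"
  have "card I \<le> DIM(real ^ 'p ^ 'm)"
  proof (rule card_le_DIM_if_biorthogonal[OF \<open>finite I\<close>])
    fix i j assume "i \<in> I" "j \<in> I"
    then show "((1 / \<pi> i) *\<^sub>R (C ** cross_gram S \<phi> (\<psi> i) ** transpose R)) \<bullet> cross_gram S \<phi> (\<psi> j)
        = (if i = j then 1 else 0)"
      using nz by (simp add: eigen_dual)
  qed
  then show "card I \<le> CARD('m) * CARD('p)"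
    by simp
qed

text \<open>This also holds for a zero eigenvalue: both sides vanish, the left one because x / 0 = 0.\<close>

lemma ip_divide_eigenvalue:
  "ip S (\<lambda>t. transpose N *v \<phi> t) (\<psi> i) / \<pi> i
    = ip S (\<lambda>t. transpose (matrix_inv (gram S \<phi>) ** matrix_inv C ** N ** matrix_inv R) *v \<phi> t) (\<psi> i)"
  unfolding ip_transpose_mult[OF phi_psi_integrable]
proof (cases "\<pi> i = 0")
  case True
  then show "(N \<bullet> cross_gram S \<phi> (\<psi> i)) / \<pi> i
      = (matrix_inv (gram S \<phi>) ** matrix_inv C ** N ** matrix_inv R) \<bullet> cross_gram S \<phi> (\<psi> i)"
    by (simp add: cross_gram_eq_0)
next
  case False
  let ?W = "gram S \<phi>" and ?U = "cross_gram S \<phi> (\<psi> i)"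
  let ?E = "matrix_inv ?W ** matrix_inv C ** N ** matrix_inv R"
  have "\<pi> i * (?E \<bullet> ?U) = ?E \<bullet> (?W ** ((C ** ?U) ** transpose R))"
    by (simp flip: eigen_cross_gram)
  also have "\<dots> = (transpose ?W ** ?E) \<bullet> ((C ** ?U) ** transpose R)"
    by (rule inner_matrix_mult_left)
  also have "\<dots> = ((transpose ?W ** ?E) ** R) \<bullet> (C ** ?U)"
    by (simp only: inner_matrix_mult_right transpose_transpose)
  also have "\<dots> = (transpose C ** ((transpose ?W ** ?E) ** R)) \<bullet> ?U"
    by (rule inner_matrix_mult_left)
  also have "transpose C ** ((transpose ?W ** ?E) ** R)
      = (C ** (?W ** matrix_inv ?W) ** matrix_inv C) ** N ** (matrix_inv R ** R)"
    using pos_def_C by (simp only: transpose_gram pos_def_def matrix_mul_assoc)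
  also have "\<dots> = N"
    using invertible_gram[OF phi_L2 phi_indep]
    by (simp add: matrix_inv_right matrix_inv_left invertible_C invertible_R)
  finally show "(N \<bullet> ?U) / \<pi> i = ?E \<bullet> ?U"
    using False by (simp add: field_simps)
qed

lemma truncated_parseval:
  assumes "L2p_on S f"
  shows "(\<Sum>i<CARD('m) * CARD('p). ip S f (\<psi> i) * ip S (\<lambda>t. transpose N *v \<phi> t) (\<psi> i))
    = ip S f (\<lambda>t. transpose N *v \<phi> t)"
proof (rule sums_unique2)
  have "ip S (\<lambda>t. transpose N *v \<phi> t) (\<psi> i) = 0" if "i \<notin> {..<CARD('m) * CARD('p)}" for i
    using that unfolding ip_transpose_mult[OF phi_psi_integrable]
    by (simp add: cross_gram_eq_0 eigenvalue_eq_0)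
  then show "(\<lambda>i. ip S f (\<psi> i) * ip S (\<lambda>t. transpose N *v \<phi> t) (\<psi> i))
      sums (\<Sum>i<CARD('m) * CARD('p). ip S f (\<psi> i) * ip S (\<lambda>t. transpose N *v \<phi> t) (\<psi> i))"
    by (intro sums_finite) simp_all
  show "(\<lambda>i. ip S f (\<psi> i) * ip S (\<lambda>t. transpose N *v \<phi> t) (\<psi> i)) sums ip S f (\<lambda>t. transpose N *v \<phi> t)"
    by (intro parseval_ip assms L2p_on_transpose_mult phi_L2 psi_L2 psi_parseval)
qed

end

locale masked_separable_eigensystem =
  measurable_partition S Tp + separable_eigensystem S \<phi> C R \<psi> \<pi>
  for S :: "real set" and Tp :: "'d::finite \<Rightarrow> real set" and \<phi> :: "real \<Rightarrow> real ^ 'm::finite"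
    and C :: "real ^ 'm ^ 'm" and R :: "real ^ 'p::finite ^ 'p"
    and \<psi> :: "nat \<Rightarrow> real \<Rightarrow> real ^ 'p" and \<pi> :: "nat \<Rightarrow> real"
begin

theorem shapley_fMMD2_masked_separable:
  "shapley (\<lambda>Q. fMMD2 S \<psi> \<pi> (CARD('m) * CARD('p))
      (masked Tp (\<lambda>t. transpose A *v \<phi> t) (\<lambda>t. transpose MA *v \<phi> t) Q) (\<lambda>t. transpose MA *v \<phi> t)) (k, a)
    = column k (A - MA) \<bullet> (gram (Tp a) \<phi> *v column k (matrix_inv (gram S \<phi>) ** matrix_inv C ** (A - MA) ** matrix_inv R))"
  (is "shapley (\<lambda>Q. fMMD2 S \<psi> \<pi> ?M (masked Tp ?X ?\<mu> Q) ?\<mu>) (k, a) = _")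
proof -
  define D where "D = A - MA"
  define E where "E = matrix_inv (gram S \<phi>) ** matrix_inv C ** D ** matrix_inv R"
  let ?Y = "\<lambda>t. transpose D *v \<phi> t" and ?h = "\<lambda>t. transpose E *v \<phi> t"
  have X_minus_\<mu>: "(\<lambda>t. ?X t - ?\<mu> t) = ?Y"
    unfolding D_def by (simp add: vector_matrix_mult_diff_rdistrib)
  have L2: "L2p_on S (\<lambda>t. transpose N *v \<phi> t)" for N :: "real ^ 'p ^ 'm"
    by (rule L2p_on_transpose_mult[OF phi_L2])
  have "shapley (\<lambda>Q. fMMD2 S \<psi> \<pi> ?M (masked Tp ?X ?\<mu> Q) ?\<mu>) (k, a)
      = (\<Sum>i<?M. cell_ip Tp ?Y (\<psi> i) (k, a) * ip S ?Y (\<psi> i) / \<pi> i)"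
    using shapley_fMMD2_masked[of ?X ?\<mu> \<psi>] psi_L2 L2[of D] unfolding X_minus_\<mu> by blast
  also have "\<dots> = (\<Sum>i<?M. ip S (cell_restrict Tp ?Y (k, a)) (\<psi> i) * ip S ?h (\<psi> i))"
    by (simp only: ip_cell_restrict[OF L2 psi_L2] ip_divide_eigenvalue D_def E_def
        times_divide_eq_right[symmetric])
  also have "\<dots> = ip S (cell_restrict Tp ?Y (k, a)) ?h"
    by (rule truncated_parseval[OF L2p_on_cell_restrict[OF L2]])
  also have "\<dots> = column k D \<bullet> (gram (Tp a) \<phi> *v column k E)"
    using set_integrable_subset[OF L2_on_mult_integrable[OF phi_L2 phi_L2] sets_cell cell_subset]
    by (simp only: ip_cell_restrict[OF L2 L2] cell_ip_transpose_mult fst_conv snd_conv)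
  finally show ?thesis
    unfolding D_def E_def .
qed

end

theorem lemma5:
  fixes lo hi :: real
    and Tp :: "'d::finite \<Rightarrow> real set"
    and \<phi> :: "real \<Rightarrow> real ^ 'm::finite"
    and A MA :: "real ^ 'p::finite ^ 'm"
    and Srow :: "real ^ 'p ^ 'p"
    and Scol :: "real ^ 'm ^ 'm"
    and \<psi> :: "nat \<Rightarrow> real \<Rightarrow> real ^ 'p"
    and \<pi> :: "nat \<Rightarrow> real"
    and lam :: "'p \<Rightarrow> real"
    and v :: "'p \<Rightarrow> real ^ 'p"
    and k :: 'p and a :: 'd
  defines "T \<equiv> {lo..hi}"
    and "W \<equiv> gram {lo..hi} \<phi>"
    and "X \<equiv> (\<lambda>t. transpose A *v \<phi> t)"
    and "\<mu> \<equiv> (\<lambda>t. transpose MA *v \<phi> t)"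
    and "K \<equiv> (\<lambda>s t. (\<phi> s \<bullet> (Scol *v \<phi> t)) *\<^sub>R Srow)"
    and "M \<equiv> CARD('m) * CARD('p)"
  assumes part_int: "\<And>b. is_interval (Tp b)"
    and part_disj: "\<And>b b'. b \<noteq> b' \<Longrightarrow> Tp b \<inter> Tp b' = {}"
    and part_cover: "(\<Union>b. Tp b) = T"
    and phi_L2: "\<And>i. L2_on T (\<lambda>t. \<phi> t $ i)"
    and phi_indep: "\<And>c. (AE t in lborel. t \<in> T \<longrightarrow> c \<bullet> \<phi> t = 0) \<Longrightarrow> c = 0"
    and Srow_pd: "pos_def Srow"
    and Scol_pd: "pos_def Scol"
    and psi_L2: "\<And>i. L2p_on T (\<psi> i)"
    and psi_orth: "\<And>i j. ip T (\<psi> i) (\<psi> j) = (if i = j then 1 else 0)"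
    and psi_eig: "\<And>i. AE t in lborel. t \<in> T \<longrightarrow> cov_op T K (\<psi> i) t = \<pi> i *\<^sub>R \<psi> i t"
    and pi_noninc: "decseq \<pi>"
    and psi_complete: "\<And>x. L2p_on T x \<Longrightarrow> (\<lambda>i. (ip T x (\<psi> i))\<^sup>2) sums ip T x x"
    and v_eig: "\<And>j. Srow *v v j = lam j *\<^sub>R v j"
    and v_orth: "\<And>i j. v i \<bullet> v j = (if i = j then 1 else 0)"
  shows "shapley (\<lambda>Q. fMMD2 T \<psi> \<pi> M (masked Tp X \<mu> Q) \<mu>) (k, a) =
    (\<Sum>j\<in>UNIV. (1 / lam j) * (v j $ k) *
       (column k (A - MA) \<bullet>
         ((gram (Tp a) \<phi> ** matrix_inv W ** matrix_inv Scol) *v ((A - MA) *v v j))))"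
proof -
  have cells: "Tp b \<in> sets lborel" for b
    using real_interval_borel_measurable[OF part_int[of b]] by simp
  interpret masked_separable_eigensystem T Tp \<phi> Scol Srow \<psi> \<pi>
    by unfold_locales (fact cells part_disj part_cover phi_L2 phi_indep Scol_pd Srow_pd psi_L2 psi_orth
        psi_eig[unfolded K_def] pi_noninc psi_complete)+
  have lam: "lam j \<noteq> 0" for j
    using pos_def_eigenvalue_pos[OF Srow_pd v_eig, of j] v_orth[of j j] by fastforce
  have "gram (Tp a) \<phi> *v column k (matrix_inv W ** matrix_inv Scol ** (A - MA) ** matrix_inv Srow)
      = (\<Sum>j\<in>UNIV. (v j $ k / lam j) *\<^sub>R ((gram (Tp a) \<phi> ** matrix_inv W ** matrix_inv Scol) *v ((A - MA) *v v j)))"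
    by (simp only: column_matrix_mult column_matrix_inv_eigenbasis[OF v_eig v_orth lam] matrix_vector_mult_sum_scaleR
        matrix_vector_mul_assoc matrix_mul_assoc)
  then show ?thesis
    using shapley_fMMD2_masked_separable[of A MA k a]
    unfolding M_def X_def \<mu>_def W_def T_def[symmetric] by (simp add: inner_sum_right)
qed

end
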